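(* For all real $x$ and $n\ge 1/2$ the following holds: \begin{equation*} -\sqrt{x^2/4+n+1/2}<\frac{U^{\prime} (n,x)}{U(n,x)}<-\sqrt{x^2 /4+n-1/2} . \end{equation*} The left inequality also holds for $n>-1/2$.
   Context: $U(a,x)$ denotes the standard parabolic cylinder function (as in the NIST Digital Library of Mathematical Functions, Chapter 12), i.e. the solution of $y''(x)-(x^2/4+a)y(x)=0$ that is recessive (decays) as $x\rightarrow+\infty$; $U'(a,x)$ is its derivative with respect to $x$. The parameter $n$ is real. *)

theory Defs
  imports "HOL-Analysis.Analysis"
begin

text \<open>Parabolic cylinder function U(a,x) (DLMF 12.2): the solution of
  y'' = (x^2/4 + a) y which is recessive at +infinity, normalised by the
  standard asymptotics U(a,x) ~ x^(-a-1/2) exp(-x^2/4) as x tends to +infinity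
  (DLMF 12.9.1).  This determines U(a, .) uniquely.\<close>

definition pcf_U :: "real \<Rightarrow> real \<Rightarrow> real" where
  "pcf_U a = (THE f. (\<forall>x. (f has_real_derivative deriv f x) (at x) \<and>
                            (deriv f has_real_derivative (x^2/4 + a) * f x) (at x)) \<and>
                ((\<lambda>x. f x / (x powr (-a - 1/2) * exp (-(x^2)/4))) \<longlongrightarrow> 1) at_top)"

definition pcf_U' :: "real \<Rightarrow> real \<Rightarrow> real" where
  "pcf_U' a x = deriv (pcf_U a) x"

end

theory Submission
  imports Defs "HOL-Real_Asymp.Real_Asymp"
begin

text \<open>For \<open>a > -1/2\<close> the function \<open>U(a,\<cdot>)\<close> has the integral representation
  \<open>U(a,x) = exp (-x^2/4) I\<^sub>k(x) / \<Gamma>(k+1)\<close> with \<open>k = a - 1/2\<close> and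
  \<open>I\<^sub>k(x) = \<integral>\<^sub>0\<^sup>\<infinity> t^k exp (-t^2/2 - x t) dt\<close>; it is identified with the function singled out in the
  definition by a Wronskian argument. Since \<open>I\<^sub>k' = -I\<^sub>k\<^sub>+\<^sub>1\<close>, the logarithmic derivative is
  \<open>U'/U = -h\<close> with \<open>h = x/2 + I\<^sub>k\<^sub>+\<^sub>1 / I\<^sub>k\<close>. Integration by parts gives
  \<open>I\<^sub>k\<^sub>+\<^sub>1 + x I\<^sub>k = k I\<^sub>k\<^sub>-\<^sub>1\<close> and Cauchy--Schwarz gives \<open>I\<^sub>k\<^sub>+\<^sub>1^2 < I\<^sub>k I\<^sub>k\<^sub>+\<^sub>2\<close>; together they
  yield \<open>h^2 < x^2/4 + k + 1\<close> and, for \<open>k \<ge> 0\<close>, \<open>x^2/4 + k < h^2\<close>.\<close>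

definition pcf_kernel :: "real \<Rightarrow> real \<Rightarrow> real \<Rightarrow> real" where
  "pcf_kernel k x t = (if 0 < t then t powr k * exp (-(t^2)/2 - x*t) else 0)"

definition pcf_moment :: "real \<Rightarrow> real \<Rightarrow> real" where
  "pcf_moment k x = (\<integral>t. pcf_kernel k x t \<partial>lborel)"

definition Gamma_integrand :: "real \<Rightarrow> real \<Rightarrow> real" where
  "Gamma_integrand k t = (if 0 < t then t powr k * exp (-t) else 0)"

lemma pcf_kernel_measurable [measurable]: "pcf_kernel k x \<in> borel_measurable borel"
  unfolding pcf_kernel_def by measurable

lemma Gamma_integrand_measurable [measurable]: "Gamma_integrand k \<in> borel_measurable borel"
  unfolding Gamma_integrand_def by measurable

lemma pcf_kernel_nonneg: "0 \<le> pcf_kernel k x t"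
  by (simp add: pcf_kernel_def)

lemma pcf_kernel_pos: "0 < t \<Longrightarrow> 0 < pcf_kernel k x t"
  by (simp add: pcf_kernel_def)

lemma pcf_kernel_add_1: "pcf_kernel (k+1) x t = t * pcf_kernel k x t"
  by (auto simp: pcf_kernel_def powr_add)

lemma has_bochner_integral_Gamma_integrand:
  assumes "k > -1"
  shows "has_bochner_integral lborel (Gamma_integrand k) (Gamma (k+1))"
proof (rule has_bochner_integral_nn_integral)
  show "0 \<le> Gamma (k+1)"
    using assms by (simp add: Gamma_real_pos less_imp_le)
  have "Gamma (k+1) = (\<integral>\<^sup>+t. ennreal (indicator {0..} t * t powr (k+1 - 1) / exp t) \<partial>lborel)"
    using assms by (intro Gamma_conv_nn_integral_real) simp
  also have "\<dots> = (\<integral>\<^sup>+t. ennreal (Gamma_integrand k t) \<partial>lborel)"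
    by (intro nn_integral_cong) (auto simp: Gamma_integrand_def indicator_def exp_minus field_simps)
  finally show "(\<integral>\<^sup>+t. ennreal (Gamma_integrand k t) \<partial>lborel) = ennreal (Gamma (k+1))"
    by simp
qed (auto simp: Gamma_integrand_def)

text \<open>Completing the square: \<open>-t^2/2 - x t \<le> (1-x)^2/2 - t\<close>.\<close>
lemma pcf_kernel_le_Gamma_integrand:
  "pcf_kernel k x t \<le> exp ((1-x)^2/2) * Gamma_integrand k t"
proof -
  have "-(t^2)/2 - x*t \<le> (1-x)^2/2 + (-t)"
    using zero_le_power2[of "t+x-1"] by (simp add: power2_eq_square field_simps)
  then have "exp (-(t^2)/2 - x*t) \<le> exp ((1-x)^2/2) * exp (-t)"
    by (simp add: exp_add[symmetric])
  then show ?thesis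
    unfolding pcf_kernel_def Gamma_integrand_def
    by (auto intro: mult_left_mono simp: mult.left_commute[of "t powr k"])
qed

lemma integrable_pcf_kernel:
  assumes "k > -1"
  shows "integrable lborel (pcf_kernel k x)"
proof (rule Bochner_Integration.integrable_bound)
  show "integrable lborel (\<lambda>t. exp ((1-x)^2/2) * Gamma_integrand k t)"
    using has_bochner_integral_Gamma_integrand[OF assms]
    by (intro integrable_mult_right) (simp add: has_bochner_integral_iff)
  show "AE t in lborel. norm (pcf_kernel k x t) \<le> norm (exp ((1-x)^2/2) * Gamma_integrand k t)"
    using pcf_kernel_le_Gamma_integrand[of k x] pcf_kernel_nonneg[of k x]
    by (auto simp: Gamma_integrand_def)
qed simp

lemma integral_pos_if_pos_on_halfline:
  fixes g :: "real \<Rightarrow> real"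
  assumes int: "integrable lborel g" and nonneg: "\<And>t. 0 \<le> g t"
    and pos: "\<And>t. 0 < t \<Longrightarrow> t \<noteq> c \<Longrightarrow> 0 < g t"
  shows "0 < integral\<^sup>L lborel g"
proof -
  have "integral\<^sup>L lborel g \<noteq> 0"
  proof
    assume "integral\<^sup>L lborel g = 0"
    then have "AE t in lborel. g t = 0"
      using integral_nonneg_eq_0_iff_AE[OF int] nonneg by simp
    then obtain N where N: "N \<in> null_sets lborel" "{t. g t \<noteq> 0} \<subseteq> N"
      by (auto elim!: AE_E simp: eventually_ae_filter)
    define a where "a = max c 0 + 1"
    have "0 < g t" if "t \<in> {a<..<a+1}" for t
      using that by (intro pos) (auto simp: a_def)
    then have "{a<..<a+1} \<subseteq> N"
      using N(2) by force
    then have "emeasure lborel {a<..<a+1} \<le> emeasure lborel N"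
      using N by (intro emeasure_mono) (auto simp: null_sets_def)
    also have "\<dots> = 0"
      using N by auto
    finally show False
      by simp
  qed
  moreover have "0 \<le> integral\<^sup>L lborel g"
    using nonneg by (simp add: integral_nonneg_AE)
  ultimately show ?thesis
    by simp
qed

lemma pcf_moment_pos: "k > -1 \<Longrightarrow> 0 < pcf_moment k x"
  unfolding pcf_moment_def
  by (rule integral_pos_if_pos_on_halfline[where c=0])
     (auto simp: integrable_pcf_kernel pcf_kernel_nonneg pcf_kernel_pos)

lemma pcf_moment_nonneg: "0 \<le> pcf_moment k x"
  unfolding pcf_moment_def by (simp add: integral_nonneg_AE pcf_kernel_nonneg)

lemma pcf_moment_antimono:
  assumes "k > -1" "x \<le> y"
  shows "pcf_moment k y \<le> pcf_moment k x"
  unfolding pcf_moment_def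
  using assms by (intro integral_mono integrable_pcf_kernel) (auto simp: pcf_kernel_def)

text \<open>The tangent-line inequality \<open>exp (-h t) \<ge> 1 - h t\<close> under the integral, i.e.
  convexity of \<open>I\<^sub>k\<close> with slope \<open>-I\<^sub>k\<^sub>+\<^sub>1\<close>.\<close>
lemma pcf_moment_tangent_le:
  assumes "k > -1"
  shows "pcf_moment k x - h * pcf_moment (k+1) x \<le> pcf_moment k (x+h)"
proof -
  have int: "integrable lborel (pcf_kernel k x)" "integrable lborel (pcf_kernel (k+1) x)"
    "integrable lborel (pcf_kernel k (x+h))"
    using assms by (auto intro!: integrable_pcf_kernel)
  have "pcf_kernel k x t - h * pcf_kernel (k+1) x t \<le> pcf_kernel k (x+h) t" for t
  proof (cases "0 < t")
    case True
    have "1 + (-h*t) \<le> exp (-h*t)"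
      by (rule exp_ge_add_one_self)
    then have "t powr k * exp (-(t^2)/2 - x*t) * (1 - h*t)
        \<le> t powr k * exp (-(t^2)/2 - x*t) * exp (-h*t)"
      by (intro mult_left_mono) auto
    moreover have "exp (-(t^2)/2 - x*t) * exp (-h*t) = exp (-(t^2)/2 - (x+h)*t)"
      by (simp add: exp_add[symmetric] algebra_simps)
    ultimately show ?thesis
      using True unfolding pcf_kernel_add_1 by (simp add: pcf_kernel_def algebra_simps)
  qed (simp add: pcf_kernel_def)
  then have "(\<integral>t. pcf_kernel k x t - h * pcf_kernel (k+1) x t \<partial>lborel) \<le> pcf_moment k (x+h)"
    unfolding pcf_moment_def using int by (intro integral_mono) auto
  then show ?thesis
    unfolding pcf_moment_def using int by simp
qed

lemma pcf_moment_lipschitz: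
  assumes "k > -1" "\<bar>h\<bar> \<le> 1"
  shows "\<bar>pcf_moment k (x+h) - pcf_moment k x\<bar> \<le> \<bar>h\<bar> * pcf_moment (k+1) (x-1)"
proof -
  have tangent: "pcf_moment k x - h * pcf_moment (k+1) x \<le> pcf_moment k (x+h)"
    "pcf_moment k (x+h) + h * pcf_moment (k+1) (x+h) \<le> pcf_moment k x"
    using pcf_moment_tangent_le[OF assms(1), of x h] pcf_moment_tangent_le[OF assms(1), of "x+h" "-h"]
    by simp_all
  have slopes: "\<bar>h\<bar> * pcf_moment (k+1) x \<le> \<bar>h\<bar> * pcf_moment (k+1) (x-1)"
    "\<bar>h\<bar> * pcf_moment (k+1) (x+h) \<le> \<bar>h\<bar> * pcf_moment (k+1) (x-1)"
    "0 \<le> \<bar>h\<bar> * pcf_moment (k+1) x" "0 \<le> \<bar>h\<bar> * pcf_moment (k+1) (x+h)"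
    using assms by (auto intro!: mult_left_mono mult_nonneg_nonneg pcf_moment_antimono pcf_moment_nonneg)
  show ?thesis
  proof (cases "h \<ge> 0")
    case True
    with tangent slopes show ?thesis
      unfolding abs_of_nonneg[OF True] abs_le_iff by linarith
  next
    case False
    then have "\<bar>h\<bar> = -h"
      by simp
    with tangent slopes show ?thesis
      unfolding abs_le_iff by (simp only:) linarith
  qed
qed

lemma isCont_pcf_moment:
  assumes "k > -1"
  shows "isCont (pcf_moment k) x"
  unfolding isCont_iff
proof (rule LIM_zero_cancel, rule Lim_null_comparison)
  have "\<forall>\<^sub>F h in at (0::real). \<bar>h\<bar> < 1"
    by (rule eventually_at_ball'[of 1, THEN eventually_mono]) auto
  then show "\<forall>\<^sub>F h in at 0. norm (pcf_moment k (x+h) - pcf_moment k x) \<le> \<bar>h\<bar> * pcf_moment (k+1) (x-1)"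
    by eventually_elim (use pcf_moment_lipschitz[OF assms] in auto)
  show "((\<lambda>h. \<bar>h\<bar> * pcf_moment (k+1) (x-1)) \<longlongrightarrow> 0) (at 0)"
    by (auto intro!: tendsto_eq_intros)
qed

lemma pcf_moment_has_real_derivative:
  assumes "k > -1"
  shows "(pcf_moment k has_real_derivative - pcf_moment (k+1) x) (at x)"
  unfolding DERIV_def
proof (rule LIM_zero_cancel, rule Lim_null_comparison)
  show "\<forall>\<^sub>F h in at 0. norm ((pcf_moment k (x+h) - pcf_moment k x) / h - - pcf_moment (k+1) x)
      \<le> \<bar>pcf_moment (k+1) (x+h) - pcf_moment (k+1) x\<bar>"
  proof (rule eventually_at_filter[THEN iffD2, OF always_eventually], intro allI impI)
    fix h :: real
    assume "h \<noteq> 0"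
    have "pcf_moment k x - h * pcf_moment (k+1) x \<le> pcf_moment k (x+h)"
      "pcf_moment k (x+h) + h * pcf_moment (k+1) (x+h) \<le> pcf_moment k x"
      using pcf_moment_tangent_le[OF assms, of x h] pcf_moment_tangent_le[OF assms, of "x+h" "-h"]
      by simp_all
    with \<open>h \<noteq> 0\<close> consider
        "- pcf_moment (k+1) x \<le> (pcf_moment k (x+h) - pcf_moment k x) / h"
        "(pcf_moment k (x+h) - pcf_moment k x) / h \<le> - pcf_moment (k+1) (x+h)"
      | "- pcf_moment (k+1) (x+h) \<le> (pcf_moment k (x+h) - pcf_moment k x) / h"
        "(pcf_moment k (x+h) - pcf_moment k x) / h \<le> - pcf_moment (k+1) x"
      by (cases "h > 0") (auto simp: field_simps)
    then show "norm ((pcf_moment k (x+h) - pcf_moment k x) / h - - pcf_moment (k+1) x)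
        \<le> \<bar>pcf_moment (k+1) (x+h) - pcf_moment (k+1) x\<bar>"
      by cases (auto simp: abs_le_iff)
  qed
  show "((\<lambda>h. \<bar>pcf_moment (k+1) (x+h) - pcf_moment (k+1) x\<bar>) \<longlongrightarrow> 0) (at 0)"
    using isCont_pcf_moment[of "k+1" x] assms
    by (intro tendsto_rabs_zero) (simp add: isCont_iff LIM_zero_iff)
qed

lemma tendsto_pcf_integrand_at_right_0:
  fixes k x :: real
  assumes "k \<ge> 0"
  shows "((\<lambda>t. t powr k * exp (-(t^2)/2 - x*t)) \<longlongrightarrow> (if k = 0 then 1 else 0)) (at_right 0)"
proof (cases "k = 0")
  case True
  have "((\<lambda>t::real. exp (-(t^2)/2 - x*t)) \<longlongrightarrow> 1) (at_right 0)"
    by (rule tendsto_eq_intros | simp)+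
  moreover have "\<forall>\<^sub>F t in at_right 0. t powr k * exp (-(t^2)/2 - x*t) = exp (-(t^2)/2 - x*t)"
    using eventually_at_right_less[of 0] by eventually_elim (simp add: True)
  ultimately have "((\<lambda>t. t powr k * exp (-(t^2)/2 - x*t)) \<longlongrightarrow> 1) (at_right 0)"
    by (rule tendsto_cong[THEN iffD2, rotated])
  with True show ?thesis
    by simp
next
  case False
  then have "((\<lambda>t::real. t powr k) \<longlongrightarrow> 0) (at_right 0)"
    using assms by (intro tendsto_zero_powrI) (auto intro: tendsto_ident_at eventually_at_rightI[of 0 1])
  then have "((\<lambda>t. t powr k * exp (-(t^2)/2 - x*t)) \<longlongrightarrow> 0 * exp (-(0^2)/2 - x*0)) (at_right 0)"
    by (intro tendsto_intros) auto
  with False show ?thesis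
    by simp
qed

text \<open>Integrate the derivative of \<open>-t^k exp (-t^2/2 - x t)\<close> over \<open>(0,\<infinity>)\<close>; the boundary
  term at \<open>t = 0\<close> survives only for \<open>k = 0\<close>.\<close>
lemma pcf_moment_recurrence:
  assumes k: "k \<ge> 0"
  shows "pcf_moment (k+1) x + x * pcf_moment k x - k * pcf_moment (k-1) x = (if k = 0 then 1 else 0)"
proof -
  define E where "E t = exp (-(t^2)/2 - x*t)" for t
  define F where "F t = - (t powr k * E t)" for t
  define f where "f t = t powr (k+1) * E t + x * (t powr k * E t) - k * (t powr (k-1) * E t)" for t
  have f_eq: "indicator {0<..} t * f t
      = pcf_kernel (k+1) x t + x * pcf_kernel k x t - k * pcf_kernel (k-1) x t" for t
    by (auto simp: f_def pcf_kernel_def E_def indicator_def)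
  have int: "integrable lborel (pcf_kernel (k+1) x)" "integrable lborel (\<lambda>t. x * pcf_kernel k x t)"
    "integrable lborel (\<lambda>t. k * pcf_kernel (k-1) x t)"
    using k by (auto intro!: integrable_pcf_kernel simp: le_less)
  have "(LBINT t=0..\<infinity>. f t) = 0 - - (if k = 0 then 1 else 0)"
  proof (rule interval_integral_FTC_integrable)
    show "(F has_vector_derivative f t) (at t)" if "0 < ereal t" "ereal t < \<infinity>" for t
      unfolding has_real_derivative_iff_has_vector_derivative[symmetric] F_def E_def f_def
      using that by (auto intro!: derivative_eq_intros simp: powr_add powr_diff field_simps)
    show "isCont f t" if "0 < ereal t" "ereal t < \<infinity>" for t
      unfolding f_def E_def using that by (auto intro!: continuous_intros)
    show "set_integrable lborel (einterval 0 \<infinity>) f"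
    proof -
      have "einterval 0 \<infinity> = {0<..}"
        by (auto simp: einterval_iff zero_ereal_def)
      then show ?thesis
        unfolding set_integrable_def using int by (simp add: f_eq)
    qed
    show "((F \<circ> real_of_ereal) \<longlongrightarrow> - (if k = 0 then 1 else 0)) (at_right 0)"
      unfolding zero_ereal_def ereal_tendsto_simps F_def[abs_def] E_def
      by (rule tendsto_minus[OF tendsto_pcf_integrand_at_right_0[OF k]])
    show "((F \<circ> real_of_ereal) \<longlongrightarrow> 0) (at_left \<infinity>)"
      unfolding ereal_tendsto_simps F_def E_def by real_asymp
  qed auto
  also have "(LBINT t=0..\<infinity>. f t)
      = (\<integral>t. pcf_kernel (k+1) x t + x * pcf_kernel k x t - k * pcf_kernel (k-1) x t \<partial>lborel)"
    unfolding interval_lebesgue_integral_0_infty set_lebesgue_integral_def f_eq[symmetric]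
    by simp
  also have "\<dots> = pcf_moment (k+1) x + x * pcf_moment k x - k * pcf_moment (k-1) x"
    unfolding pcf_moment_def using int by simp
  finally show ?thesis
    by simp
qed

lemma pcf_moment_recurrence_add_2:
  assumes "k > -1"
  shows "pcf_moment (k+2) x + x * pcf_moment (k+1) x = (k+1) * pcf_moment k x"
  using pcf_moment_recurrence[of "k+1" x] assms by (simp add: add.assoc)

text \<open>Strict Cauchy--Schwarz: \<open>\<integral>\<^sub>0\<^sup>\<infinity> (t - c)^2 t^k exp (-t^2/2 - x t) dt > 0\<close> for \<open>c = I\<^sub>k\<^sub>+\<^sub>1 / I\<^sub>k\<close>.\<close>
lemma pcf_moment_sq_less:
  assumes k: "k > -1"
  shows "pcf_moment (k+1) x ^ 2 < pcf_moment k x * pcf_moment (k+2) x"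
proof -
  define c where "c = pcf_moment (k+1) x / pcf_moment k x"
  have pos: "0 < pcf_moment k x"
    using pcf_moment_pos k by blast
  have int: "integrable lborel (pcf_kernel k x)" "integrable lborel (pcf_kernel (k+1) x)"
    "integrable lborel (pcf_kernel (k+2) x)"
    using k by (auto intro!: integrable_pcf_kernel)
  have square: "pcf_kernel k x t * (t - c)^2
      = pcf_kernel (k+2) x t - 2 * c * pcf_kernel (k+1) x t + c^2 * pcf_kernel k x t" for t
    using pcf_kernel_add_1[of "k+1" x t] pcf_kernel_add_1[of k x t]
    by (simp add: add.assoc power2_eq_square algebra_simps)
  have "0 < (\<integral>t. pcf_kernel k x t * (t - c)^2 \<partial>lborel)"
  proof (rule integral_pos_if_pos_on_halfline[where c=c])
    show "integrable lborel (\<lambda>t. pcf_kernel k x t * (t - c)^2)"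
      unfolding square using int by simp
  qed (auto simp: pcf_kernel_nonneg pcf_kernel_pos)
  also have "\<dots> = pcf_moment (k+2) x - 2 * c * pcf_moment (k+1) x + c^2 * pcf_moment k x"
    unfolding square pcf_moment_def using int by simp
  also have "\<dots> = pcf_moment (k+2) x - pcf_moment (k+1) x ^ 2 / pcf_moment k x"
    using pos by (simp add: c_def field_simps power2_eq_square)
  finally show ?thesis
    using pos by (simp add: field_simps)
qed

definition pcf_kernel_rescaled :: "real \<Rightarrow> real \<Rightarrow> real \<Rightarrow> real" where
  "pcf_kernel_rescaled k x s = (if 0 < s then s powr k * exp (-s) * exp (-((s/x)^2)/2) else 0)"

lemma pcf_kernel_rescaled_measurable [measurable]: "pcf_kernel_rescaled k x \<in> borel_measurable borel"
  unfolding pcf_kernel_rescaled_def by measurable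

lemma pcf_moment_rescale:
  assumes "x > 0"
  shows "x powr (k+1) * pcf_moment k x = (\<integral>s. pcf_kernel_rescaled k x s \<partial>lborel)"
proof -
  have kernel: "pcf_kernel k x (s/x) = pcf_kernel_rescaled k x s / x powr k" for s
    using assms
    by (auto simp: pcf_kernel_def pcf_kernel_rescaled_def powr_divide zero_less_divide_iff
        exp_add[symmetric] power_divide)
  have "pcf_moment k x = \<bar>1/x\<bar> *\<^sub>R (\<integral>s. pcf_kernel k x (0 + 1/x * s) \<partial>lborel)"
    unfolding pcf_moment_def using assms by (intro lborel_integral_real_affine) simp
  also have "\<dots> = 1 / x * (1 / x powr k * (\<integral>s. pcf_kernel_rescaled k x s \<partial>lborel))"
    using assms by (simp add: kernel)
  finally show ?thesis
    using assms by (simp add: powr_add field_simps)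
qed

text \<open>After substituting \<open>t = s/x\<close>, dominated convergence as \<open>x \<rightarrow> \<infinity>\<close> leaves Euler's integral.\<close>
lemma pcf_moment_asymptotic:
  assumes k: "k > -1"
  shows "((\<lambda>x. x powr (k+1) * pcf_moment k x) \<longlongrightarrow> Gamma (k+1)) at_top"
proof -
  have Gamma: "integrable lborel (Gamma_integrand k)" "integral\<^sup>L lborel (Gamma_integrand k) = Gamma (k+1)"
    using has_bochner_integral_Gamma_integrand[OF k] by (auto simp: has_bochner_integral_iff)
  have "((\<lambda>x. integral\<^sup>L lborel (pcf_kernel_rescaled k x)) \<longlongrightarrow> integral\<^sup>L lborel (Gamma_integrand k)) at_top"
  proof (rule integral_dominated_convergence_at_top[where w="Gamma_integrand k"])
    show "AE s in lborel. ((\<lambda>x. pcf_kernel_rescaled k x s) \<longlongrightarrow> Gamma_integrand k s) at_top"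
    proof (rule AE_I2)
      fix s :: real
      have "((\<lambda>x. s/x) \<longlongrightarrow> 0) at_top"
        by real_asymp
      then have "((\<lambda>x. s powr k * exp (-s) * exp (-((s/x)^2)/2))
          \<longlongrightarrow> s powr k * exp (-s) * exp (-(0^2)/2)) at_top"
        by (intro tendsto_intros) auto
      then show "((\<lambda>x. pcf_kernel_rescaled k x s) \<longlongrightarrow> Gamma_integrand k s) at_top"
        by (simp add: pcf_kernel_rescaled_def Gamma_integrand_def)
    qed
    show "\<forall>\<^sub>F x in at_top. AE s in lborel. norm (pcf_kernel_rescaled k x s) \<le> Gamma_integrand k s"
      by (intro always_eventually allI AE_I2)
        (auto simp: pcf_kernel_rescaled_def Gamma_integrand_def intro!: mult_left_le)
  qed (use Gamma in simp_all)
  moreover have "\<forall>\<^sub>F x in at_top. integral\<^sup>L lborel (pcf_kernel_rescaled k x) = x powr (k+1) * pcf_moment k x"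
    using eventually_gt_at_top[of 0] by eventually_elim (simp add: pcf_moment_rescale)
  ultimately show ?thesis
    using Gamma by (simp add: tendsto_cong)
qed

lemma wronskian_constant:
  fixes f f' g g' q :: "real \<Rightarrow> real"
  assumes f: "\<And>x. (f has_real_derivative f' x) (at x)" "\<And>x. (f' has_real_derivative q x * f x) (at x)"
    and g: "\<And>x. (g has_real_derivative g' x) (at x)" "\<And>x. (g' has_real_derivative q x * g x) (at x)"
  shows "f x * g' x - f' x * g x = f y * g' y - f' y * g y"
proof (rule DERIV_isconst_all[where f="\<lambda>x. f x * g' x - f' x * g x"], intro allI)
  fix x
  show "((\<lambda>x. f x * g' x - f' x * g x) has_real_derivative 0) (at x)"
    using DERIV_diff[OF DERIV_mult[OF f(1) g(2)] DERIV_mult[OF f(2) g(1)], of x]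
    by (simp add: algebra_simps)
qed

lemma filterlim_at_top_if_deriv_ge:
  fixes \<phi> \<phi>' :: "real \<Rightarrow> real"
  assumes "c > 0"
    and deriv: "\<And>x. x \<ge> X \<Longrightarrow> (\<phi> has_real_derivative \<phi>' x) (at x)"
    and ge: "\<And>x. x \<ge> X \<Longrightarrow> c \<le> \<phi>' x"
  shows "filterlim \<phi> at_top at_top"
proof (rule filterlim_at_top_mono)
  show "filterlim (\<lambda>x. \<phi> X + c * (x - X)) at_top at_top"
    using \<open>c > 0\<close> by real_asymp
  have "\<phi> X + c * (x - X) \<le> \<phi> x" if "x \<ge> X" for x
  proof -
    have "\<phi> X - c * X \<le> \<phi> x - c * x"
    proof (rule DERIV_nonneg_imp_nondecreasing[OF that])
      fix t
      assume "X \<le> t"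
      then show "\<exists>y. ((\<lambda>t. \<phi> t - c * t) has_real_derivative y) (at t) \<and> 0 \<le> y"
        using deriv ge by (intro exI[of _ "\<phi>' t - c"]) (auto intro!: derivative_eq_intros)
    qed
    then show ?thesis
      by (simp add: algebra_simps)
  qed
  then show "\<forall>\<^sub>F x in at_top. \<phi> X + c * (x - X) \<le> \<phi> x"
    by (auto simp: eventually_at_top_linorder)
qed

text \<open>With \<open>W\<close> the (constant) Wronskian, \<open>(g/f)' = W/f\<^sup>2\<close>; since \<open>f \<rightarrow> 0\<close>, a nonzero \<open>W\<close> would
  drive \<open>W g/f\<close> to infinity, contradicting \<open>g/f \<rightarrow> 1\<close>.\<close>
lemma ode_solution_eq_if_ratio_tendsto_1:
  fixes f f' g g' q :: "real \<Rightarrow> real"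
  assumes f: "\<And>x. (f has_real_derivative f' x) (at x)" "\<And>x. (f' has_real_derivative q x * f x) (at x)"
    and g: "\<And>x. (g has_real_derivative g' x) (at x)" "\<And>x. (g' has_real_derivative q x * g x) (at x)"
    and pos: "\<And>x. 0 < f x"
    and f_lim: "(f \<longlongrightarrow> 0) at_top"
    and ratio_lim: "((\<lambda>x. g x / f x) \<longlongrightarrow> 1) at_top"
  shows "g = f"
proof -
  define W where "W = f 0 * g' 0 - f' 0 * g 0"
  have ratio_deriv: "((\<lambda>x. g x / f x) has_real_derivative W / f x ^ 2) (at x)" for x
  proof -
    have "((\<lambda>x. g x / f x) has_real_derivative (g' x * f x - g x * f' x) / (f x * f x)) (at x)"
      using pos[of x] by (intro derivative_intros f g) auto
    moreover have "g' x * f x - g x * f' x = W"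
      using wronskian_constant[OF f g, of x 0] by (simp add: W_def mult.commute)
    ultimately show ?thesis
      by (simp add: power2_eq_square)
  qed
  have "W = 0"
  proof (rule ccontr)
    assume "W \<noteq> 0"
    have f_sq_lim: "((\<lambda>x. f x ^ 2) \<longlongrightarrow> 0) at_top"
      using tendsto_power[OF f_lim, of 2] by simp
    have "\<forall>\<^sub>F x in at_top. f x ^ 2 < W ^ 2"
      using order_tendstoD(2)[OF f_sq_lim, of "W ^ 2"] \<open>W \<noteq> 0\<close> by simp
    then obtain X where X: "\<And>x. x \<ge> X \<Longrightarrow> f x ^ 2 < W ^ 2"
      by (auto simp: eventually_at_top_linorder)
    have unbounded: "filterlim (\<lambda>x. W * (g x / f x)) at_top at_top"
    proof (rule filterlim_at_top_if_deriv_ge[where c=1 and X=X])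
      show "((\<lambda>x. W * (g x / f x)) has_real_derivative W * (W / f x ^ 2)) (at x)" for x
        by (intro DERIV_cmult ratio_deriv)
      show "1 \<le> W * (W / f x ^ 2)" if "x \<ge> X" for x
        using X[OF that] pos[of x] by (simp add: power2_eq_square field_simps)
    qed simp
    have "((\<lambda>x. W * (g x / f x)) \<longlongrightarrow> W * 1) at_top"
      by (intro tendsto_intros ratio_lim)
    then show False
      using filterlim_at_top_imp_at_infinity[OF unbounded]
      by (intro not_tendsto_and_filterlim_at_infinity[of at_top]) simp_all
  qed
  define r where "r = g 0 / f 0"
  have ratio_const: "g x / f x = r" for x
    unfolding r_def using ratio_deriv \<open>W = 0\<close> by (intro DERIV_isconst_all) auto
  then have "((\<lambda>x. g x / f x) \<longlongrightarrow> r) at_top"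
    by simp
  with ratio_lim have "r = 1"
    by (intro tendsto_unique[of at_top]) simp_all
  show "g = f"
  proof
    fix x
    show "g x = f x"
      using ratio_const[of x] \<open>r = 1\<close> pos[of x] by (simp add: field_simps)
  qed
qed

text \<open>The integral representation DLMF 12.5.1, valid for \<open>a > -1/2\<close>.\<close>
definition pcf_U_repr :: "real \<Rightarrow> real \<Rightarrow> real" where
  "pcf_U_repr a x = exp (-(x^2)/4) * pcf_moment (a - 1/2) x / Gamma (a + 1/2)"

definition pcf_U_repr' :: "real \<Rightarrow> real \<Rightarrow> real" where
  "pcf_U_repr' a x =
     exp (-(x^2)/4) * (-(x/2) * pcf_moment (a - 1/2) x - pcf_moment (a + 1/2) x) / Gamma (a + 1/2)"

lemma pcf_U_repr_shifted:
  "pcf_U_repr (k + 1/2) x = exp (-(x^2)/4) * pcf_moment k x / Gamma (k+1)"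
  "pcf_U_repr' (k + 1/2) x = exp (-(x^2)/4) * (-(x/2) * pcf_moment k x - pcf_moment (k+1) x) / Gamma (k+1)"
  by (simp_all add: pcf_U_repr_def pcf_U_repr'_def add.assoc)

lemma pcf_U_repr_pos: "a > -1/2 \<Longrightarrow> 0 < pcf_U_repr a x"
  unfolding pcf_U_repr_def by (intro divide_pos_pos mult_pos_pos pcf_moment_pos Gamma_real_pos) auto

lemma pcf_U_repr_has_real_derivative:
  assumes "a > -1/2"
  shows "(pcf_U_repr a has_real_derivative pcf_U_repr' a x) (at x)"
proof -
  obtain k where a: "a = k + 1/2" and k: "k > -1"
    using assms by (intro that[of "a - 1/2"]) auto
  have "Gamma (k+1) > 0"
    using k by (intro Gamma_real_pos) simp
  then have Gamma: "Gamma (k+1) \<noteq> 0" "Gamma (1+k) \<noteq> 0"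
    by (simp_all add: add.commute)
  show ?thesis
    unfolding a pcf_U_repr_shifted[abs_def]
    by (auto intro!: derivative_eq_intros pcf_moment_has_real_derivative[OF k] simp: field_simps Gamma)
qed

lemma pcf_U_repr'_has_real_derivative:
  assumes "a > -1/2"
  shows "(pcf_U_repr' a has_real_derivative (x^2/4 + a) * pcf_U_repr a x) (at x)"
proof -
  obtain k where a: "a = k + 1/2" and k: "k > -1"
    using assms by (intro that[of "a - 1/2"]) auto
  have "Gamma (k+1) > 0"
    using k by (intro Gamma_real_pos) simp
  then have Gamma: "Gamma (k+1) \<noteq> 0" "Gamma (1+k) \<noteq> 0"
    by (simp_all add: add.commute)
  have "(pcf_moment (k+1) has_real_derivative - pcf_moment (k+2) x) (at x)"
    using pcf_moment_has_real_derivative[of "k+1" x] k by (simp add: add.assoc)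
  then have deriv: "(pcf_U_repr' a has_real_derivative exp (-(x^2)/4)
      * ((x^2/4 - 1/2) * pcf_moment k x + x * pcf_moment (k+1) x + pcf_moment (k+2) x) / Gamma (k+1))
      (at x)"
    unfolding a pcf_U_repr_shifted[abs_def]
    by (auto intro!: derivative_eq_intros pcf_moment_has_real_derivative[OF k]
        simp: field_simps power2_eq_square Gamma)
  have rec: "pcf_moment (k+2) x = (k+1) * pcf_moment k x - x * pcf_moment (k+1) x"
    using pcf_moment_recurrence_add_2[OF k, of x] by simp
  have ode: "exp (-(x^2)/4)
      * ((x^2/4 - 1/2) * pcf_moment k x + x * pcf_moment (k+1) x + pcf_moment (k+2) x) / Gamma (k+1)
      = (x^2/4 + a) * pcf_U_repr a x"
    unfolding a pcf_U_repr_shifted rec by (simp add: field_simps power2_eq_square Gamma)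
  show ?thesis
    using deriv by (simp only: ode)
qed

lemma pcf_U_repr_asymptotic:
  assumes "a > -1/2"
  shows "((\<lambda>x. pcf_U_repr a x / (x powr (-a - 1/2) * exp (-(x^2)/4))) \<longlongrightarrow> 1) at_top"
proof -
  obtain k where a: "a = k + 1/2" and k: "k > -1"
    using assms by (intro that[of "a - 1/2"]) auto
  have "Gamma (k+1) > 0"
    using k by (intro Gamma_real_pos) simp
  then have Gamma: "Gamma (k+1) \<noteq> 0" "Gamma (1+k) \<noteq> 0"
    by (simp_all add: add.commute)
  have "((\<lambda>x. x powr (k+1) * pcf_moment k x / Gamma (k+1)) \<longlongrightarrow> Gamma (k+1) / Gamma (k+1)) at_top"
    by (intro tendsto_intros pcf_moment_asymptotic k) (use Gamma in simp)
  moreover have "\<forall>\<^sub>F x in at_top. x powr (k+1) * pcf_moment k x / Gamma (k+1)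
      = pcf_U_repr a x / (x powr (-a - 1/2) * exp (-(x^2)/4))"
  proof (rule eventually_mono[OF eventually_gt_at_top[of 0]])
    fix x :: real
    assume "0 < x"
    then have "x powr (-a - 1/2) = 1 / x powr (k+1)"
      by (simp add: a powr_minus_divide[symmetric] add_ac)
    then show "x powr (k+1) * pcf_moment k x / Gamma (k+1)
        = pcf_U_repr a x / (x powr (-a - 1/2) * exp (-(x^2)/4))"
      using \<open>0 < x\<close> by (simp add: a pcf_U_repr_shifted)
  qed
  ultimately show ?thesis
    using Gamma by (simp add: tendsto_cong)
qed

lemma pcf_U_eq_repr:
  assumes a: "a > -1/2"
  shows "pcf_U a = pcf_U_repr a"
proof -
  define ref where "ref x = x powr (-a - 1/2) * exp (-(x^2)/4)" for x
  have deriv_repr: "deriv (pcf_U_repr a) = pcf_U_repr' a"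
    by (intro ext DERIV_imp_deriv pcf_U_repr_has_real_derivative a)
  have repr_lim: "((\<lambda>x. pcf_U_repr a x / ref x) \<longlongrightarrow> 1) at_top"
    unfolding ref_def by (rule pcf_U_repr_asymptotic[OF a])
  have ref_nonzero: "\<forall>\<^sub>F x in at_top. ref x \<noteq> 0"
    using eventually_gt_at_top[of 0] by eventually_elim (simp add: ref_def)
  show ?thesis
    unfolding pcf_U_def
  proof (rule the_equality)
    show "(\<forall>x. (pcf_U_repr a has_real_derivative deriv (pcf_U_repr a) x) (at x) \<and>
              (deriv (pcf_U_repr a) has_real_derivative (x^2/4 + a) * pcf_U_repr a x) (at x)) \<and>
          ((\<lambda>x. pcf_U_repr a x / (x powr (-a - 1/2) * exp (-(x^2)/4))) \<longlongrightarrow> 1) at_top"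
      unfolding deriv_repr
      using pcf_U_repr_has_real_derivative[OF a] pcf_U_repr'_has_real_derivative[OF a]
        pcf_U_repr_asymptotic[OF a]
      by blast
  next
    fix g
    assume g: "(\<forall>x. (g has_real_derivative deriv g x) (at x) \<and>
                   (deriv g has_real_derivative (x^2/4 + a) * g x) (at x)) \<and>
               ((\<lambda>x. g x / (x powr (-a - 1/2) * exp (-(x^2)/4))) \<longlongrightarrow> 1) at_top"
    show "g = pcf_U_repr a"
    proof (rule ode_solution_eq_if_ratio_tendsto_1[where q="\<lambda>x. x^2/4 + a" and f'="pcf_U_repr' a"])
      show "(g has_real_derivative deriv g x) (at x)"
        "(deriv g has_real_derivative (x^2/4 + a) * g x) (at x)" for x
        using g by blast+
      have "((\<lambda>x. pcf_U_repr a x / ref x * ref x) \<longlongrightarrow> 1 * 0) at_top"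
        by (intro tendsto_intros repr_lim) (unfold ref_def, real_asymp)
      moreover have "\<forall>\<^sub>F x in at_top. pcf_U_repr a x / ref x * ref x = pcf_U_repr a x"
        using ref_nonzero by eventually_elim simp
      ultimately have "(pcf_U_repr a \<longlongrightarrow> 1 * 0) at_top"
        by (rule tendsto_cong[THEN iffD1, rotated])
      then show "(pcf_U_repr a \<longlongrightarrow> 0) at_top"
        by simp
      have "((\<lambda>x. (g x / ref x) / (pcf_U_repr a x / ref x)) \<longlongrightarrow> 1 / 1) at_top"
        using g by (intro tendsto_intros repr_lim) (simp_all add: ref_def)
      moreover have "\<forall>\<^sub>F x in at_top. (g x / ref x) / (pcf_U_repr a x / ref x) = g x / pcf_U_repr a x"
        using ref_nonzero by eventually_elim simp
      ultimately have "((\<lambda>x. g x / pcf_U_repr a x) \<longlongrightarrow> 1 / 1) at_top"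
        by (rule tendsto_cong[THEN iffD1, rotated])
      then show "((\<lambda>x. g x / pcf_U_repr a x) \<longlongrightarrow> 1) at_top"
        by simp
    qed (use a in \<open>simp_all add: pcf_U_repr_has_real_derivative pcf_U_repr'_has_real_derivative
        pcf_U_repr_pos\<close>)
  qed
qed

lemma pcf_U_log_deriv:
  assumes k: "k > -1"
  shows "pcf_U' (k + 1/2) x / pcf_U (k + 1/2) x = - (x/2 + pcf_moment (k+1) x / pcf_moment k x)"
proof -
  have U: "pcf_U (k + 1/2) = pcf_U_repr (k + 1/2)"
    using k by (intro pcf_U_eq_repr) simp
  have U': "deriv (pcf_U_repr (k + 1/2)) = pcf_U_repr' (k + 1/2)"
    using k by (intro ext DERIV_imp_deriv pcf_U_repr_has_real_derivative) simp
  have "Gamma (k+1) > 0" "pcf_moment k x > 0"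
    using k by (simp_all add: Gamma_real_pos pcf_moment_pos)
  then have "pcf_U_repr' (k + 1/2) x / pcf_U_repr (k + 1/2) x
      = - (x/2 + pcf_moment (k+1) x / pcf_moment k x)"
    unfolding pcf_U_repr_shifted by (simp add: field_simps)
  then show ?thesis
    unfolding pcf_U'_def U U' .
qed

text \<open>For \<open>h = x/2 + I\<^sub>k\<^sub>+\<^sub>1 / I\<^sub>k\<close> one has \<open>(h I\<^sub>k)^2 = (x^2/4) I\<^sub>k^2 + I\<^sub>k\<^sub>+\<^sub>1 (I\<^sub>k\<^sub>+\<^sub>1 + x I\<^sub>k)\<close>;
  both bounds estimate the last product, by the recurrence and Cauchy--Schwarz.\<close>
lemma pcf_moment_ratio_less_sqrt:
  assumes k: "k > -1"
  shows "x/2 + pcf_moment (k+1) x / pcf_moment k x < sqrt (x^2/4 + k + 1)"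
proof -
  define I0 I1 I2 where "I0 = pcf_moment k x" and "I1 = pcf_moment (k+1) x" and "I2 = pcf_moment (k+2) x"
  have "I0 > 0"
    unfolding I0_def using k by (rule pcf_moment_pos)
  have rec: "I2 + x * I1 = (k+1) * I0" and cs: "I1^2 < I0 * I2"
    unfolding I0_def I1_def I2_def using pcf_moment_recurrence_add_2 pcf_moment_sq_less k by blast+
  have "((x/2 + I1/I0) * I0)^2 = x^2/4 * I0^2 + (I1^2 + x * I1 * I0)"
    using \<open>I0 > 0\<close> by (simp add: field_simps power2_eq_square)
  also have "\<dots> < x^2/4 * I0^2 + (I0 * I2 + x * I1 * I0)"
    using cs by simp
  also have "\<dots> = x^2/4 * I0^2 + I0 * (I2 + x * I1)"
    by (simp add: algebra_simps)
  also have "\<dots> = (x^2/4 + k + 1) * I0^2"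
    unfolding rec by (simp add: power2_eq_square algebra_simps)
  finally have "(x/2 + I1/I0)^2 < x^2/4 + k + 1"
    using \<open>I0 > 0\<close> by (simp add: power_mult_distrib)
  then show ?thesis
    unfolding I0_def I1_def by (rule real_less_rsqrt)
qed

lemma pcf_moment_ratio_greater_sqrt:
  assumes k: "k \<ge> 0"
  shows "sqrt (x^2/4 + k) < x/2 + pcf_moment (k+1) x / pcf_moment k x"
proof -
  define I0 I1 where "I0 = pcf_moment k x" and "I1 = pcf_moment (k+1) x"
  have "I0 > 0" "I1 > 0"
    unfolding I0_def I1_def using k by (simp_all add: pcf_moment_pos)
  have key: "0 < I1 + x * I0 \<and> k * I0^2 < I1 * (I1 + x * I0)"
  proof (cases "k = 0")
    case True
    then show ?thesis
      using pcf_moment_recurrence[of 0 x] \<open>I1 > 0\<close> by (simp add: I0_def I1_def)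
  next
    case False
    then have "k > 0"
      using k by simp
    define Im where "Im = pcf_moment (k-1) x"
    have rec: "I1 + x * I0 = k * Im"
      using pcf_moment_recurrence[OF k, of x] False by (simp add: I0_def I1_def Im_def)
    have "Im > 0"
      unfolding Im_def using \<open>k > 0\<close> by (intro pcf_moment_pos) simp
    have shifts: "k - 1 + 1 = k" "k - 1 + 2 = k + 1"
      by simp_all
    have "pcf_moment (k-1+1) x ^ 2 < pcf_moment (k-1) x * pcf_moment (k-1+2) x"
      using \<open>k > 0\<close> by (intro pcf_moment_sq_less) simp
    then have "I0^2 < Im * I1"
      unfolding shifts I0_def I1_def Im_def .
    then have "k * I0^2 < k * (Im * I1)"
      using \<open>k > 0\<close> by simp
    then show ?thesis
      unfolding rec using \<open>k > 0\<close> \<open>Im > 0\<close> by (simp add: algebra_simps)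
  qed
  define h where "h = x/2 + I1/I0"
  have "h * I0 = (I1 + (I1 + x * I0)) / 2"
    using \<open>I0 > 0\<close> by (simp add: h_def field_simps)
  then have "h * I0 > 0"
    using key \<open>I1 > 0\<close> by simp
  then have "h > 0"
    using \<open>I0 > 0\<close> by (simp add: zero_less_mult_iff)
  have "(x^2/4 + k) * I0^2 = x^2/4 * I0^2 + k * I0^2"
    by (simp add: algebra_simps)
  also have "\<dots> < x^2/4 * I0^2 + I1 * (I1 + x * I0)"
    using key by simp
  also have "\<dots> = (h * I0)^2"
    using \<open>I0 > 0\<close> by (simp add: h_def field_simps power2_eq_square)
  finally have "x^2/4 + k < h^2"
    using \<open>I0 > 0\<close> by (simp add: power_mult_distrib)
  then have "sqrt (x^2/4 + k) < h"
    using \<open>h > 0\<close> by (intro real_less_lsqrt) simp_all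
  then show ?thesis
    by (simp add: h_def I0_def I1_def)
qed

lemma pcf_U_log_deriv_greater:
  assumes "a > -1/2"
  shows "- sqrt (x^2/4 + a + 1/2) < pcf_U' a x / pcf_U a x"
proof -
  obtain k where a: "a = k + 1/2" and k: "k > -1"
    using assms by (intro that[of "a - 1/2"]) auto
  show ?thesis
    using pcf_moment_ratio_less_sqrt[OF k, of x] unfolding a pcf_U_log_deriv[OF k]
    by (simp add: add.assoc)
qed

lemma pcf_U_log_deriv_less:
  assumes "a \<ge> 1/2"
  shows "pcf_U' a x / pcf_U a x < - sqrt (x^2/4 + a - 1/2)"
proof -
  obtain k where a: "a = k + 1/2" and k: "k \<ge> 0"
    using assms by (intro that[of "a - 1/2"]) auto
  then have k': "k > -1"
    by simp
  show ?thesis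
    using pcf_moment_ratio_greater_sqrt[OF k, of x] unfolding a pcf_U_log_deriv[OF k']
    by simp
qed

theorem theorem12:
  fixes n x :: real
  shows "(n \<ge> 1/2 \<longrightarrow>
            - sqrt (x^2/4 + n + 1/2) < pcf_U' n x / pcf_U n x \<and>
            pcf_U' n x / pcf_U n x < - sqrt (x^2/4 + n - 1/2)) \<and>
         (n > -1/2 \<longrightarrow> - sqrt (x^2/4 + n + 1/2) < pcf_U' n x / pcf_U n x)"
  using pcf_U_log_deriv_greater pcf_U_log_deriv_less by force

end
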